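(* Let $A\colon[0,\infty)\to\mathbb R^{n\times n}$ be continuous and suppose $x'=A(t)x$ has an exponential dichotomy on $[0,\infty)$ with constants $N,\lambda>0$. Let $f\colon[0,\infty)\times\mathbb R^n\to\mathbb R^n$ be continuously differentiable with $$|f_x(t,x)|\le L_1+L_2|x|+L_3|x|^2+\dots+L_{k+1}|x|^k\quad\text{for all }t\ge0,\ x\in\mathbb R^n,$$ where $k\in\mathbb N$, $L_j\ge0$ for $j=1,\dots,k+1$, and $L_1<\lambda/(2N)$. Then for every $\rho>0$ with $L_1+L_2\rho+\dots+L_{k+1}\rho^k<\lambda/(2N)$, the equation $x'=A(t)x+f(t,x)$ has the conditional Lipschitz shadowing property in $B_\rho(0)$.
   Context: $|\cdot|$ is a fixed norm on $\mathbb R^n$ and the induced matrix norm; $B_r(x)=\{y:|y-x|\le r\}$; $f_x$ is the partial derivative of $f$ with respect to $x$. For continuous $g\colon[0,\infty)\times\mathbb R^n\to\mathbb R^n$ and $\tau\in(0,\infty]$, a pseudosolution of $x'=g(t,x)$ on $[0,\tau)$ is a $C^1$ map $y\colon[0,\tau)\to\mathbb R^n$ with $\sigma_y:=\sup_{0\le t<\tau}|y'(t)-g(t,y(t))|<\infty$. The equation has the conditional Lipschitz shadowing property in $H\neq\emptyset$ if there exist $\varepsilon_0,\kappa>0$ such that whenever $0<\varepsilon\le\varepsilon_0$ and $y$ is a pseudosolution on $[0,\tau)$ ($\tau\in(0,\infty]$) with $\sigma_y\le\varepsilon$ and $y(t)\in H$ for all $t\in[0,\tau)$, there is a solution $x$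 on $[0,\tau)$ with $\sup_{0\le t<\tau}|x(t)-y(t)|\le\kappa\varepsilon$. With $T(t,s)$ the transition matrix of $x'=A(t)x$: an exponential dichotomy on $[0,\infty)$ consists of projections $P(t)$ and constants $N,\lambda>0$ with $P(t)T(t,s)=T(t,s)P(s)$, $|T(t,s)P(s)|\le Ne^{-\lambda(t-s)}$ for $t\ge s\ge0$, and $|T(t,s)(I-P(s))|\le Ne^{-\lambda(s-t)}$ for $0\le t\le s$. *)

theory Defs
  imports "HOL-Analysis.Analysis"
begin

definition is_norm :: "(real^'n \<Rightarrow> real) \<Rightarrow> bool" where
  "is_norm nrm \<longleftrightarrow>
     (\<forall>x. nrm x = 0 \<longleftrightarrow> x = 0) \<and>
     (\<forall>x y. nrm (x + y) \<le> nrm x + nrm y) \<and>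
     (\<forall>c x. nrm (c *\<^sub>R x) = \<bar>c\<bar> * nrm x)"

definition mat_norm :: "(real^'n \<Rightarrow> real) \<Rightarrow> real^'n^'n \<Rightarrow> real" where
  "mat_norm nrm M = (SUP x\<in>{x. nrm x \<le> 1}. nrm (M *v x))"

definition Ivl :: "ereal \<Rightarrow> real set" where
  "Ivl \<tau> = {t. 0 \<le> t \<and> ereal t < \<tau>}"

definition transition_matrix ::
  "(real \<Rightarrow> real^'n^'n) \<Rightarrow> (real \<Rightarrow> real \<Rightarrow> real^'n^'n) \<Rightarrow> bool" where
  "transition_matrix A T \<longleftrightarrow>
     (\<forall>s\<ge>0. T s s = mat 1 \<and>
        (\<forall>t\<ge>0. ((\<lambda>\<tau>. T \<tau> s) has_vector_derivative (A t ** T t s)) (at t within {0..})))"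

definition exp_dichotomy ::
  "(real^'n \<Rightarrow> real) \<Rightarrow> (real \<Rightarrow> real^'n^'n) \<Rightarrow> real \<Rightarrow> real \<Rightarrow> bool" where
  "exp_dichotomy nrm A N lam \<longleftrightarrow>
     (\<exists>T P. transition_matrix A T \<and>
        (\<forall>t\<ge>0. P t ** P t = P t) \<and>
        (\<forall>t s. 0 \<le> t \<and> 0 \<le> s \<longrightarrow> P t ** T t s = T t s ** P s) \<and>
        (\<forall>t s. 0 \<le> s \<and> s \<le> t \<longrightarrow> mat_norm nrm (T t s ** P s) \<le> N * exp (- lam * (t - s))) \<and>
        (\<forall>t s. 0 \<le> t \<and> t \<le> s \<longrightarrow>
            mat_norm nrm (T t s ** (mat 1 - P s)) \<le> N * exp (- lam * (s - t))))"

definition pseudosolution ::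
  "(real^'n \<Rightarrow> real) \<Rightarrow> (real \<Rightarrow> real^'n \<Rightarrow> real^'n) \<Rightarrow> ereal \<Rightarrow> (real \<Rightarrow> real^'n) \<Rightarrow> real \<Rightarrow> bool" where
  "pseudosolution nrm g \<tau> y eps \<longleftrightarrow>
     (\<exists>y'. (\<forall>t\<in>Ivl \<tau>. (y has_vector_derivative y' t) (at t within Ivl \<tau>)) \<and>
           continuous_on (Ivl \<tau>) y' \<and>
           (\<forall>t\<in>Ivl \<tau>. nrm (y' t - g t (y t)) \<le> eps))"

definition is_solution ::
  "(real \<Rightarrow> real^'n \<Rightarrow> real^'n) \<Rightarrow> ereal \<Rightarrow> (real \<Rightarrow> real^'n) \<Rightarrow> bool" where
  "is_solution g \<tau> x \<longleftrightarrow>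
     (\<forall>t\<in>Ivl \<tau>. (x has_vector_derivative g t (x t)) (at t within Ivl \<tau>))"

definition cond_lip_shadowing ::
  "(real^'n \<Rightarrow> real) \<Rightarrow> (real \<Rightarrow> real^'n \<Rightarrow> real^'n) \<Rightarrow> (real^'n) set \<Rightarrow> bool" where
  "cond_lip_shadowing nrm g H \<longleftrightarrow>
     (\<exists>eps0>0. \<exists>\<kappa>>0. \<forall>eps \<tau> y.
        0 < eps \<and> eps \<le> eps0 \<and> \<tau> > 0 \<and> pseudosolution nrm g \<tau> y eps \<and>
        (\<forall>t\<in>Ivl \<tau>. y t \<in> H) \<longrightarrow>
        (\<exists>x. is_solution g \<tau> x \<and> (\<forall>t\<in>Ivl \<tau>. nrm (x t - y t) \<le> \<kappa> * eps)))"

definition C1_with_partials ::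
  "(real \<Rightarrow> real^'n \<Rightarrow> real^'n) \<Rightarrow> (real \<Rightarrow> real^'n \<Rightarrow> real^'n) \<Rightarrow> (real \<Rightarrow> real^'n \<Rightarrow> real^'n^'n) \<Rightarrow> bool" where
  "C1_with_partials f ft fx \<longleftrightarrow>
     (\<forall>t\<ge>0. \<forall>x. ((\<lambda>p. f (fst p) (snd p)) has_derivative
                    (\<lambda>h. fst h *\<^sub>R ft t x + fx t x *v snd h)) (at (t, x) within {0..} \<times> UNIV)) \<and>
     continuous_on ({0..} \<times> UNIV) (\<lambda>p. ft (fst p) (snd p)) \<and>
     continuous_on ({0..} \<times> UNIV) (\<lambda>p. fx (fst p) (snd p))"

end

theory Submission
  imports Defs
begin

text \<open>Choose \<open>R > \<rho>\<close> with \<open>Lp := L\<^sub>1 + L\<^sub>2 R + \<dots> + L\<^sub>k\<^sub>+\<^sub>1 R\<^sup>k < \<lambda>/(2N)\<close>; by the mean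
  value inequality \<open>f(t,\<cdot>)\<close> is \<open>Lp\<close>-Lipschitz on \<open>B\<^sub>R(0)\<close>. The Lyapunov--Perron operator \<open>G\<close>
  of the dichotomy solves \<open>z' = A z + k\<close> on \<open>[0,\<tau>)\<close> and maps functions bounded by \<open>K\<close> to
  functions bounded by \<open>2NK/\<lambda>\<close>, independently of \<open>\<tau>\<close>. For a pseudosolution \<open>y\<close> in \<open>B\<^sub>\<rho>(0)\<close>,
  the function \<open>y + z\<close> is a solution as soon as \<open>z = G(A y + f(\<cdot>, y + z) - y')\<close>. Since
  \<open>2N Lp/\<lambda> < 1\<close>, the right-hand side is a contraction of the continuous functions bounded by
  \<open>\<kappa>\<epsilon>\<close>, \<open>\<kappa> = 2N/(\<lambda> - 2N Lp)\<close>, as long as \<open>\<kappa>\<epsilon> \<le> R - \<rho>\<close>; its fixed point is the shadowing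
  solution.\<close>

locale vector_norm =
  fixes nrm :: "real^'n \<Rightarrow> real"
  assumes is_norm: "is_norm nrm"
begin

lemma nrm_eq_0_iff: "nrm x = 0 \<longleftrightarrow> x = 0"
  using is_norm unfolding is_norm_def by simp

lemma nrm_triangle: "nrm (x + y) \<le> nrm x + nrm y"
  using is_norm unfolding is_norm_def by simp

lemma nrm_scaleR: "nrm (c *\<^sub>R x) = \<bar>c\<bar> * nrm x"
  using is_norm unfolding is_norm_def by simp

lemma nrm_zero [simp]: "nrm 0 = 0"
  using nrm_eq_0_iff by simp

lemma nrm_uminus [simp]: "nrm (- x) = nrm x"
  using nrm_scaleR[of "-1" x] by simp

lemma nrm_nonneg [simp]: "0 \<le> nrm x"
  using nrm_triangle[of x "- x"] by simp

lemma nrm_pos: "x \<noteq> 0 \<Longrightarrow> 0 < nrm x"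
  using nrm_eq_0_iff[of x] nrm_nonneg[of x] by linarith

lemma nrm_minus_commute: "nrm (x - y) = nrm (y - x)"
  using nrm_uminus[of "x - y"] by simp

lemma nrm_triangle_diff: "nrm (x - z) \<le> nrm (x - y) + nrm (y - z)"
  using nrm_triangle[of "x - y" "y - z"] by simp

lemma nrm_diff_le_add: "nrm (x - y) \<le> nrm x + nrm y"
  using nrm_triangle[of x "- y"] by simp

lemma nrm_sum_le: "finite S \<Longrightarrow> nrm (sum f S) \<le> (\<Sum>i\<in>S. nrm (f i))"
  by (induction S rule: finite_induct) (auto intro: order_trans[OF nrm_triangle])

lemma convex_nrm_ball: "convex {x. nrm x \<le> R}"
  unfolding convex_def
proof (intro allI impI ballI, clarsimp)
  fix x y and u v :: real assume "nrm x \<le> R" "nrm y \<le> R" "0 \<le> u" "0 \<le> v" "u + v = 1"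
  then have "u * nrm x + v * nrm y \<le> u * R + v * R"
    by (intro add_mono mult_left_mono) auto
  with nrm_triangle[of "u *\<^sub>R x" "v *\<^sub>R y"] \<open>0 \<le> u\<close> \<open>0 \<le> v\<close> \<open>u + v = 1\<close>
  show "nrm (u *\<^sub>R x + v *\<^sub>R y) \<le> R"
    by (simp add: nrm_scaleR distrib_right[symmetric])
qed

lemma nrm_le_norm: "\<exists>c>0. \<forall>x. nrm x \<le> c * norm x"
proof -
  define c where "c = 1 + (\<Sum>b\<in>(Basis::(real^'n) set). nrm b)"
  have "c > 0"
    unfolding c_def by (intro add_pos_nonneg sum_nonneg) auto
  moreover have "nrm x \<le> c * norm x" for x
  proof -
    have "nrm x = nrm (\<Sum>b\<in>Basis. (x \<bullet> b) *\<^sub>R b)"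
      by (simp add: euclidean_representation)
    also have "\<dots> \<le> (\<Sum>b\<in>Basis. \<bar>x \<bullet> b\<bar> * nrm b)"
      by (rule order_trans[OF nrm_sum_le]) (simp_all add: nrm_scaleR)
    also have "\<dots> \<le> (\<Sum>b\<in>(Basis::(real^'n) set). norm x * nrm b)"
      by (intro sum_mono mult_right_mono) (auto simp: Basis_le_norm)
    also have "\<dots> \<le> c * norm x"
      unfolding c_def by (simp add: sum_distrib_left[symmetric] algebra_simps)
    finally show ?thesis .
  qed
  ultimately show ?thesis by blast
qed

lemma continuous_on_nrm: "continuous_on S nrm"
proof -
  obtain c where c: "c > 0" "\<And>x. nrm x \<le> c * norm x"
    using nrm_le_norm by blast
  have "\<bar>nrm x - nrm y\<bar> \<le> c * dist x y" for x y
    using nrm_triangle_diff[of x 0 y] nrm_triangle_diff[of y 0 x] c(2)[of "x - y"]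
      nrm_minus_commute[of x y]
    by (simp add: dist_norm)
  then have "lipschitz_on c UNIV nrm"
    using c(1) by (intro lipschitz_onI) (auto simp: dist_real_def)
  then show ?thesis
    by (rule continuous_on_subset[OF lipschitz_on_continuous_on]) simp
qed

lemma norm_le_nrm: "\<exists>c>0. \<forall>x. norm x \<le> c * nrm x"
proof -
  have "sphere (0::real^'n) 1 \<noteq> {}"
    using vector_choose_size[of 1] by auto
  then obtain u where u: "u \<in> sphere 0 1" "\<And>y. y \<in> sphere 0 1 \<Longrightarrow> nrm u \<le> nrm y"
    using continuous_attains_inf[OF compact_sphere _ continuous_on_nrm] by blast
  have m: "nrm u > 0"
    using u(1) by (intro nrm_pos) auto
  have "norm x \<le> (1 / nrm u) * nrm x" for x
  proof (cases "x = 0")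
    case False
    then have "nrm u \<le> nrm ((1 / norm x) *\<^sub>R x)"
      by (intro u(2)) simp
    then show ?thesis
      using False m by (simp add: nrm_scaleR field_simps)
  qed simp
  then show ?thesis
    using m by (intro exI[of _ "1 / nrm u"]) auto
qed

lemma nrm_limit_le:
  assumes "X \<longlonglongrightarrow> x" "\<forall>\<^sub>F m in sequentially. nrm (X m) \<le> b"
  shows "nrm x \<le> b"
proof (rule tendsto_upperbound[OF _ assms(2)])
  show "(\<lambda>m. nrm (X m)) \<longlonglongrightarrow> nrm x"
    using continuous_on_tendsto_compose[OF continuous_on_nrm[of UNIV] assms(1)] by simp
qed simp

lemma bdd_above_nrm_matrix_image: "bdd_above ((\<lambda>x. nrm (M *v x)) ` {x. nrm x \<le> 1})"
proof -
  obtain c2 where c2: "c2 > 0" "\<And>x. nrm x \<le> c2 * norm x"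
    using nrm_le_norm by blast
  obtain c1 where c1: "c1 > 0" "\<And>x. norm x \<le> c1 * nrm x"
    using norm_le_nrm by blast
  obtain K where K: "K > 0" "\<And>x. norm (M *v x) \<le> norm x * K"
    using bounded_linear.pos_bounded[OF matrix_vector_mul_bounded_linear[of M]] by blast
  have "nrm (M *v x) \<le> c2 * (c1 * K)" if "nrm x \<le> 1" for x
  proof -
    have "norm x \<le> c1"
      using c1(2)[of x] mult_left_mono[OF that, of c1] c1(1) by linarith
    then have "norm (M *v x) \<le> c1 * K"
      using order_trans[OF K(2)[of x] mult_right_mono] K(1) by simp
    then show ?thesis
      using order_trans[OF c2(2)[of "M *v x"] mult_left_mono] c2(1) by simp
  qed
  then show ?thesis by (auto intro!: bdd_aboveI)
qed

lemma nrm_matrix_vector_mult_le: "nrm (M *v x) \<le> mat_norm nrm M * nrm x"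
proof (cases "x = 0")
  case False
  then have p: "nrm x > 0" by (rule nrm_pos)
  define u where "u = (1 / nrm x) *\<^sub>R x"
  have "nrm u = 1"
    unfolding u_def using p by (simp add: nrm_scaleR)
  then have "nrm (M *v u) \<le> mat_norm nrm M"
    unfolding mat_norm_def by (intro cSUP_upper[OF _ bdd_above_nrm_matrix_image]) simp
  moreover have "M *v x = nrm x *\<^sub>R (M *v u)"
    unfolding u_def using p by (simp add: matrix_vector_mult_scaleR)
  ultimately show ?thesis
    using p by (simp add: nrm_scaleR mult.commute)
qed simp

lemma nrm_one_notin_rel_interior: "nrm w = 1 \<Longrightarrow> w \<notin> rel_interior {x. nrm x \<le> 1}"
proof
  let ?S = "{x. nrm x \<le> 1}"
  assume nw: "nrm w = 1" and "w \<in> rel_interior ?S"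
  then obtain e where e: "e > 0" "ball w e \<inter> affine hull ?S \<subseteq> ?S"
    unfolding mem_rel_interior_ball by blast
  have wn: "norm w > 0"
    using nw by (cases "w = 0") auto
  define t where "t = e / (2 * norm w)"
  have t0: "t > 0"
    unfolding t_def using e wn by simp
  have "(1 + t) *\<^sub>R w + (- t) *\<^sub>R 0 \<in> affine hull ?S"
    using nw by (intro mem_affine affine_affine_hull hull_inc) simp_all
  moreover have "dist w ((1 + t) *\<^sub>R w) < e"
    using t0 wn e(1) by (simp add: dist_norm t_def algebra_simps)
  ultimately have "(1 + t) *\<^sub>R w \<in> ?S"
    using e(2) by auto
  then show False
    using t0 nw by (simp add: nrm_scaleR)
qed

text \<open>A supporting hyperplane of the unit ball at \<open>v / nrm v\<close> gives a linear functional
  of dual norm 1 attaining \<open>nrm v\<close> (the finite-dimensional Hahn--Banach theorem).\<close>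

lemma supporting_functional: "\<exists>a. (\<forall>x. a \<bullet> x \<le> nrm x) \<and> a \<bullet> v = nrm v"
proof (cases "v = 0")
  case False
  then have pv: "nrm v > 0" by (rule nrm_pos)
  define S where "S = {x. nrm x \<le> 1}"
  define w where "w = (1 / nrm v) *\<^sub>R v"
  have nw: "nrm w = 1"
    unfolding w_def using pv by (simp add: nrm_scaleR)
  have wS: "w \<in> S" and zero: "0 \<in> S"
    unfolding S_def using nw by simp_all
  obtain a where a: "a \<noteq> 0" "\<And>y. y \<in> closure S \<Longrightarrow> a \<bullet> w \<le> a \<bullet> y"
    by (rule supporting_hyperplane_relative_frontier[OF convex_nrm_ball[of 1, folded S_def]
        closure_subset[THEN subsetD, OF wS]]) (use nrm_one_notin_rel_interior[OF nw] S_def in auto)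
  define b where "b = - a"
  have b: "\<And>y. y \<in> S \<Longrightarrow> b \<bullet> y \<le> b \<bullet> w"
    unfolding b_def using a(2) closure_subset by fastforce
  have bx: "b \<bullet> x \<le> nrm x * (b \<bullet> w)" for x
  proof (cases "x = 0")
    case False
    then have px: "nrm x > 0" by (rule nrm_pos)
    have "(1 / nrm x) *\<^sub>R x \<in> S"
      unfolding S_def using px by (simp add: nrm_scaleR)
    then have "b \<bullet> ((1 / nrm x) *\<^sub>R x) \<le> b \<bullet> w"
      by (rule b)
    then show ?thesis
      using px by (simp add: field_simps)
  qed (use b[OF zero] in simp)
  have "b \<bullet> w > 0"
  proof (rule ccontr)
    assume "\<not> b \<bullet> w > 0"
    then have "b \<bullet> b \<le> 0"
      using bx[of b] mult_nonneg_nonpos[OF nrm_nonneg[of b], of "b \<bullet> w"] by linarith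
    then show False
      using a(1) unfolding b_def
      by (metis inner_gt_zero_iff inner_minus_left inner_minus_right minus_minus not_le)
  qed
  then have "((1 / (b \<bullet> w)) *\<^sub>R b) \<bullet> x \<le> nrm x" for x
    using bx[of x] by (simp add: field_simps)
  moreover have "((1 / (b \<bullet> w)) *\<^sub>R b) \<bullet> v = nrm v"
    using \<open>b \<bullet> w > 0\<close> pv by (simp add: w_def field_simps)
  ultimately show ?thesis
    by blast
qed (intro exI[of _ 0]; simp)

lemma nrm_integral_le:
  fixes g :: "real \<Rightarrow> real^'n"
  assumes "g integrable_on S" "b integrable_on S" "\<And>s. s \<in> S \<Longrightarrow> nrm (g s) \<le> b s"
  shows "nrm (integral S g) \<le> integral S b"
proof -
  obtain a where a: "\<And>x. a \<bullet> x \<le> nrm x" "a \<bullet> integral S g = nrm (integral S g)"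
    using supporting_functional by blast
  have "a \<bullet> integral S g = integral S (\<lambda>s. a \<bullet> g s)"
    using integral_linear[OF assms(1) bounded_linear_inner_right[of a]] by (simp add: o_def)
  also have "\<dots> \<le> integral S b"
    using integrable_linear[OF assms(1) bounded_linear_inner_right[of a]] assms(2,3) a(1)
    by (intro integral_le) (auto simp: o_def intro: order_trans)
  finally show ?thesis
    using a(2) by simp
qed

lemma integrable_nrm_integral_le:
  fixes g :: "real \<Rightarrow> real^'n"
  assumes S: "S \<in> sets lebesgue" and g: "continuous_on S g" and b: "b integrable_on S"
    and le: "\<And>s. s \<in> S \<Longrightarrow> nrm (g s) \<le> b s"
  shows "g integrable_on S" "nrm (integral S g) \<le> integral S b"
proof -
  obtain c where c: "c > 0" "\<And>x. norm x \<le> c * nrm x"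
    using norm_le_nrm by blast
  have "g absolutely_integrable_on S"
  proof (rule measurable_bounded_by_integrable_imp_absolutely_integrable
      [OF continuous_imp_measurable_on_sets_lebesgue[OF g S] S])
    show "(\<lambda>s. c * b s) integrable_on S"
      using integrable_on_cmult_left[OF b] by simp
    show "norm (g s) \<le> c * b s" if "s \<in> S" for s
      using c(2)[of "g s"] mult_left_mono[OF le[OF that], of c] c(1) by linarith
  qed
  then show gi: "g integrable_on S"
    using absolutely_integrable_on_def by blast
  show "nrm (integral S g) \<le> integral S b"
    by (rule nrm_integral_le[OF gi b le])
qed

lemma nrm_integral_le_decay:
  fixes g :: "real \<Rightarrow> real^'n"
  assumes S: "S \<in> sets lebesgue" and g: "continuous_on S g"
    and e: "e integrable_on S" "integral S e \<le> 1 / lam"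
    and c: "0 \<le> c" and le: "\<And>s. s \<in> S \<Longrightarrow> nrm (g s) \<le> c * e s"
  shows "g integrable_on S" "nrm (integral S g) \<le> c / lam"
proof -
  have ce: "(\<lambda>s. c * e s) integrable_on S"
    using integrable_on_cmult_left[OF e(1)] by simp
  show "g integrable_on S"
    by (rule integrable_nrm_integral_le(1)[OF S g ce le])
  have "nrm (integral S g) \<le> c * integral S e"
    using integrable_nrm_integral_le(2)[OF S g ce le] by simp
  also have "\<dots> \<le> c / lam"
    using mult_left_mono[OF e(2) c] by simp
  finally show "nrm (integral S g) \<le> c / lam" .
qed

lemma nrm_diff_le_derivative_bound:
  fixes g :: "real^'n \<Rightarrow> real^'n" and D :: "real^'n \<Rightarrow> real^'n^'n"
  assumes "convex S"
    and deriv: "\<And>x. x \<in> S \<Longrightarrow> (g has_derivative (\<lambda>h. D x *v h)) (at x within S)"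
    and bound: "\<And>x. x \<in> S \<Longrightarrow> mat_norm nrm (D x) \<le> L"
    and "a \<in> S" "b \<in> S"
  shows "nrm (g a - g b) \<le> L * nrm (a - b)"
proof -
  obtain l where l: "\<And>x. l \<bullet> x \<le> nrm x" "l \<bullet> (g a - g b) = nrm (g a - g b)"
    using supporting_functional by blast
  define w where "w \<theta> = b + \<theta> *\<^sub>R (a - b)" for \<theta> :: real
  have wS: "w \<theta> \<in> S" if "\<theta> \<in> {0..1}" for \<theta>
    using convexD_alt[OF \<open>convex S\<close> \<open>b \<in> S\<close> \<open>a \<in> S\<close>, of \<theta>] that
    by (simp add: w_def algebra_simps)
  have dw: "(w has_derivative (\<lambda>h. h *\<^sub>R (a - b))) (at \<theta> within {0..1})" for \<theta>
    unfolding w_def by (intro derivative_eq_intros) auto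
  have "((\<lambda>\<theta>. l \<bullet> g (w \<theta>)) has_derivative (\<lambda>h. l \<bullet> (D (w \<theta>) *v (h *\<^sub>R (a - b)))))
      (at \<theta> within {0..1})" if "0 \<le> \<theta>" "\<theta> \<le> 1" for \<theta>
  proof (rule has_derivative_inner_right, rule has_derivative_in_compose2[OF deriv _ _ dw])
    show "w ` {0..1} \<subseteq> S"
      using wS by blast
  qed (use that in auto)
  from mvt_very_simple[OF zero_le_one this] obtain \<theta> where \<theta>: "\<theta> \<in> {0..1}"
    "l \<bullet> g (w 1) - l \<bullet> g (w 0) = l \<bullet> (D (w \<theta>) *v ((1 - 0) *\<^sub>R (a - b)))"
    by blast
  have "nrm (g a - g b) = l \<bullet> (D (w \<theta>) *v (a - b))"
    using \<theta>(2) l(2) by (simp add: w_def inner_diff_right)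
  also have "\<dots> \<le> mat_norm nrm (D (w \<theta>)) * nrm (a - b)"
    using l(1) nrm_matrix_vector_mult_le by (rule order_trans)
  also have "\<dots> \<le> L * nrm (a - b)"
    using bound[OF wS[OF \<theta>(1)]] by (intro mult_right_mono) auto
  finally show ?thesis .
qed

lemma nrm_diff_le_geometric:
  fixes X :: "nat \<Rightarrow> real^'n"
  assumes q: "0 \<le> q" "q < 1"
    and step: "\<And>m. nrm (X (Suc m) - X m) \<le> d * q ^ m"
    and "m \<le> n"
  shows "nrm (X n - X m) \<le> d / (1 - q) * q ^ m"
proof -
  obtain p where n: "n = m + p"
    using \<open>m \<le> n\<close> le_Suc_ex by blast
  have "nrm (X (m + p) - X m) \<le> d * q ^ m * (1 - q ^ p) / (1 - q)"
  proof (induction p)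
    case (Suc p)
    have "nrm (X (m + Suc p) - X m) \<le> nrm (X (Suc (m + p)) - X (m + p)) + nrm (X (m + p) - X m)"
      using nrm_triangle_diff by simp
    also have "\<dots> \<le> d * q ^ (m + p) + d * q ^ m * (1 - q ^ p) / (1 - q)"
      using step Suc.IH by (rule add_mono)
    also have "\<dots> = d * q ^ m * (1 - q ^ Suc p) / (1 - q)"
      using q by (simp add: field_simps power_add)
    finally show ?case .
  qed simp
  also have "\<dots> \<le> d * q ^ m / (1 - q)"
  proof -
    have "0 \<le> d * q ^ m"
      using step[of m] nrm_nonneg order_trans by blast
    then show ?thesis
      using q by (intro divide_right_mono) (auto simp: mult_left_le zero_le_power)
  qed
  finally show ?thesis
    unfolding n by simp
qed

lemma uniform_limit_of_geometric_steps:
  fixes X :: "nat \<Rightarrow> 'a \<Rightarrow> real^'n"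
  assumes q: "0 \<le> q" "q < 1"
    and step: "\<And>m t. t \<in> S \<Longrightarrow> nrm (X (Suc m) t - X m t) \<le> d * q ^ m"
  obtains z where "uniform_limit S X z sequentially"
    "\<And>m t. t \<in> S \<Longrightarrow> nrm (z t - X m t) \<le> d / (1 - q) * q ^ m"
proof -
  define c where "c = d / (1 - q)"
  have tail: "nrm (X n t - X m t) \<le> c * q ^ m" if "t \<in> S" "m \<le> n" for m n t
    unfolding c_def using nrm_diff_le_geometric[OF q step[OF that(1)] that(2)] .
  obtain c1 where c1: "c1 > 0" "\<And>x. norm x \<le> c1 * nrm x"
    using norm_le_nrm by blast
  have "uniformly_Cauchy_on S X"
  proof (rule uniformly_Cauchy_onI')
    fix e :: real assume "e > 0"
    moreover have "(\<lambda>m. c1 * c * q ^ m) \<longlonglongrightarrow> 0"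
      using q by (intro tendsto_mult_right_zero LIMSEQ_power_zero) simp
    ultimately obtain M where M: "\<And>m. m \<ge> M \<Longrightarrow> c1 * c * q ^ m < e"
      unfolding lim_sequentially dist_real_def by (metis abs_less_iff diff_zero)
    have "dist (X m t) (X n t) < e" if "t \<in> S" "m \<ge> M" "n > m" for t m n
    proof -
      have "dist (X m t) (X n t) \<le> c1 * nrm (X n t - X m t)"
        using c1(2)[of "X n t - X m t"] by (simp add: dist_norm norm_minus_commute)
      also have "\<dots> \<le> c1 * (c * q ^ m)"
        using tail[of t m n] that c1(1) by (intro mult_left_mono) auto
      also have "\<dots> < e"
        using M[OF that(2)] by (simp add: mult.assoc)
      finally show ?thesis .
    qed
    then show "\<exists>M. \<forall>t\<in>S. \<forall>m\<ge>M. \<forall>n>m. dist (X m t) (X n t) < e"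
      by blast
  qed
  then obtain z where lim: "uniform_limit S X z sequentially"
    using Cauchy_uniformly_convergent uniformly_convergent_on_def by blast
  moreover have "nrm (z t - X m t) \<le> c * q ^ m" if "t \<in> S" for t m
  proof (rule nrm_limit_le)
    show "(\<lambda>n. X n t - X m t) \<longlonglongrightarrow> z t - X m t"
      using tendsto_uniform_limitI[OF lim that] by (intro tendsto_diff) auto
    show "\<forall>\<^sub>F n in sequentially. nrm (X n t - X m t) \<le> c * q ^ m"
      using eventually_ge_at_top[of m] by eventually_elim (rule tail[OF that])
  qed
  ultimately show ?thesis
    using that unfolding c_def by blast
qed

text \<open>Banach's fixed point theorem in the sup-norm of \<open>nrm\<close>; the contraction property is
  phrased with a bound \<open>d\<close> on the distance to avoid suprema.\<close>

lemma sup_contraction_fixpoint: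
  fixes F :: "('a::topological_space \<Rightarrow> real^'n) \<Rightarrow> 'a \<Rightarrow> real^'n" and S :: "'a set"
    and r q :: real
  defines "B \<equiv> {z. continuous_on S z \<and> (\<forall>t\<in>S. nrm (z t) \<le> r)}"
  assumes r: "0 \<le> r" and q: "0 \<le> q" "q < 1"
    and into: "\<And>z. z \<in> B \<Longrightarrow> F z \<in> B"
    and contraction: "\<And>z w d t. z \<in> B \<Longrightarrow> w \<in> B \<Longrightarrow> (\<And>s. s \<in> S \<Longrightarrow> nrm (z s - w s) \<le> d)
      \<Longrightarrow> t \<in> S \<Longrightarrow> nrm (F z t - F w t) \<le> q * d"
  shows "\<exists>z\<in>B. \<forall>t\<in>S. F z t = z t"
proof -
  define X where "X m = (F ^^ m) (\<lambda>_. 0)" for m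
  have XB: "X m \<in> B" for m
  proof (induction m)
    case 0
    show ?case
      using r by (simp add: X_def B_def)
  next
    case (Suc m)
    then show ?case
      using into by (simp add: X_def)
  qed
  have step: "nrm (X (Suc m) t - X m t) \<le> 2 * r * q ^ m" if "t \<in> S" for m t
    using that
  proof (induction m arbitrary: t)
    case 0
    then show ?case
      using XB[of 0] XB[of 1] nrm_diff_le_add[of "X 1 t" "X 0 t"] by (force simp: B_def)
  next
    case (Suc m)
    have "nrm (F (X (Suc m)) t - F (X m) t) \<le> q * (2 * r * q ^ m)"
      using Suc by (intro contraction XB)
    then show ?case
      by (simp add: X_def algebra_simps)
  qed
  define c where "c = 2 * r / (1 - q)"
  obtain z where lim: "uniform_limit S X z sequentially"
    and close: "\<And>m t. t \<in> S \<Longrightarrow> nrm (z t - X m t) \<le> c * q ^ m"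
    using uniform_limit_of_geometric_steps[where X = X and S = S and d = "2 * r", OF q step]
    unfolding c_def by blast
  have zB: "z \<in> B"
  proof -
    have "continuous_on S z"
      using XB by (intro uniform_limit_theorem[OF _ lim]) (auto simp: B_def)
    moreover have "nrm (z t) \<le> r" if "t \<in> S" for t
      using tendsto_uniform_limitI[OF lim that] XB that by (intro nrm_limit_le) (auto simp: B_def)
    ultimately show ?thesis
      unfolding B_def by blast
  qed
  have "F z t = z t" if "t \<in> S" for t
  proof -
    have "nrm (F z t - z t) \<le> 2 * c * q * q ^ m" for m
    proof -
      have "nrm (F z t - X (Suc m) t) \<le> q * (c * q ^ m)"
        using close that by (simp add: X_def) (intro contraction zB XB[unfolded X_def])
      moreover have "nrm (X (Suc m) t - z t) \<le> c * q ^ Suc m"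
        using close[OF that, of "Suc m"] by (simp add: nrm_minus_commute)
      moreover have "q * (c * q ^ m) + c * q ^ Suc m = 2 * c * q * q ^ m"
        by (simp add: algebra_simps)
      ultimately show ?thesis
        using nrm_triangle_diff[of "F z t" "z t" "X (Suc m) t"] by linarith
    qed
    moreover have "(\<lambda>m. 2 * c * q * q ^ m) \<longlonglongrightarrow> 0"
      using q by (intro tendsto_mult_right_zero LIMSEQ_power_zero) simp
    ultimately have "nrm (F z t - z t) \<le> 0"
      by (intro LIMSEQ_le_const) auto
    then show ?thesis
      using nrm_eq_0_iff nrm_nonneg by (metis antisym eq_iff_diff_eq_0)
  qed
  with zB show ?thesis
    by blast
qed

end

lemma bounded_bilinear_matrix_vector_mult:
  "bounded_bilinear (\<lambda>(M::real^'n^'m) (v::real^'n). M *v v)"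
proof -
  have "bilinear (\<lambda>(M::real^'n^'m) (v::real^'n). M *v v)"
    unfolding bilinear_def linear_iff
    by (simp add: matrix_vector_right_distrib matrix_vector_mult_add_rdistrib
        matrix_vector_mult_scaleR scaleR_matrix_vector_assoc)
  then show ?thesis
    by (simp add: bilinear_conv_bounded_bilinear)
qed

lemma gronwall_inequality:
  fixes \<phi> \<phi>' :: "real \<Rightarrow> real"
  assumes "a \<le> b" and cont: "continuous_on {a..b} \<phi>"
    and deriv: "\<And>s. a < s \<Longrightarrow> s < b \<Longrightarrow> (\<phi> has_real_derivative \<phi>' s) (at s)"
    and bound: "\<And>s. a < s \<Longrightarrow> s < b \<Longrightarrow> \<phi>' s \<le> C * \<phi> s"
  shows "\<phi> b \<le> exp (C * (b - a)) * \<phi> a"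
proof -
  have "exp (- C * b) * \<phi> b \<le> exp (- C * a) * \<phi> a"
  proof (rule DERIV_nonpos_imp_decreasing_open[OF \<open>a \<le> b\<close>])
    fix s assume s: "a < s" "s < b"
    have "((\<lambda>s. exp (- C * s) * \<phi> s) has_real_derivative
        exp (- C * s) * (\<phi>' s - C * \<phi> s)) (at s)"
    proof (rule DERIV_cong[OF DERIV_mult[OF _ deriv[OF s]]])
      show "((\<lambda>s. exp (- C * s)) has_real_derivative exp (- C * s) * (- C)) (at s)"
        by (auto intro!: derivative_eq_intros)
    qed (simp add: algebra_simps)
    moreover have "exp (- C * s) * (\<phi>' s - C * \<phi> s) \<le> 0"
      using bound[OF s] by (simp add: mult_nonneg_nonpos)
    ultimately show "\<exists>y. ((\<lambda>s. exp (- C * s) * \<phi> s) has_real_derivative y) (at s) \<and> y \<le> 0"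
      by blast
  qed (intro continuous_intros cont)
  then have "exp (C * b) * (exp (- C * b) * \<phi> b) \<le> exp (C * b) * (exp (- C * a) * \<phi> a)"
    by (intro mult_left_mono) auto
  then show ?thesis
    by (simp only: mult.assoc[symmetric] exp_add[symmetric]) (simp add: right_diff_distrib)
qed

lemma gronwall_zero:
  fixes \<phi> \<phi>' :: "real \<Rightarrow> real"
  assumes cont: "continuous_on {a..b} \<phi>"
    and deriv: "\<And>s. a < s \<Longrightarrow> s < b \<Longrightarrow> (\<phi> has_real_derivative \<phi>' s) (at s)"
    and bound: "\<And>s. a < s \<Longrightarrow> s < b \<Longrightarrow> \<bar>\<phi>' s\<bar> \<le> C * \<phi> s"
    and r: "r \<in> {a..b}" "\<phi> r = 0" and t: "t \<in> {a..b}"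
  shows "\<phi> t \<le> 0"
proof (cases "r \<le> t")
  case True
  have "\<phi> t \<le> exp (C * (t - r)) * \<phi> r"
  proof (rule gronwall_inequality[OF True continuous_on_subset[OF cont]])
    show "(\<phi> has_real_derivative \<phi>' s) (at s)" if "r < s" "s < t" for s
      using that r t by (intro deriv) auto
    show "\<phi>' s \<le> C * \<phi> s" if "r < s" "s < t" for s
      using bound[of s] that r t by (auto simp: abs_le_iff)
  qed (use r t in auto)
  then show ?thesis
    using r(2) by simp
next
  case False
  have "\<phi> (- (- t)) \<le> exp (C * (- t - - r)) * \<phi> (- (- r))"
  proof (rule gronwall_inequality[where \<phi> = "\<lambda>s. \<phi> (- s)" and \<phi>' = "\<lambda>s. - \<phi>' (- s)"])
    show "continuous_on {- r..- t} (\<lambda>s. \<phi> (- s))"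
      using r t by (intro continuous_on_compose2[OF cont] continuous_intros) auto
    show "((\<lambda>s. \<phi> (- s)) has_real_derivative - \<phi>' (- s)) (at s)" if "- r < s" "s < - t" for s
      using that r t by (intro DERIV_mirror[THEN iffD1, simplified] deriv) auto
    show "- \<phi>' (- s) \<le> C * \<phi> (- s)" if "- r < s" "s < - t" for s
      using bound[of "- s"] that r t by (auto simp: abs_le_iff)
  qed (use False in simp)
  then show ?thesis
    using r(2) by simp
qed

text \<open>\<open>gronwall_zero\<close> applies to the squared Euclidean norm of a solution, since
  \<open>|(x \<bullet> x)'| \<le> C (x \<bullet> x)\<close> on compact intervals.\<close>

lemma linear_ode_zero_unique:
  fixes A :: "real \<Rightarrow> real^'n^'n" and x :: "real \<Rightarrow> real^'n"
  assumes contA: "continuous_on {0..} A"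
    and dx: "\<And>t. t \<ge> 0 \<Longrightarrow> (x has_vector_derivative A t *v x t) (at t within {0..})"
    and r: "r \<ge> 0" "x r = 0" and t: "t \<ge> 0"
  shows "x t = 0"
proof -
  obtain K where K: "\<And>M v. norm ((M::real^'n^'n) *v v) \<le> norm M * norm v * K"
    using bounded_bilinear.bounded[OF bounded_bilinear_matrix_vector_mult] by blast
  define b where "b = max r t"
  have "bounded (A ` {0..b})"
    by (intro compact_imp_bounded compact_continuous_image continuous_on_subset[OF contA]) auto
  then obtain B where B: "\<And>s. s \<in> {0..b} \<Longrightarrow> norm (A s) \<le> B"
    unfolding bounded_pos by blast
  define C where "C = 2 * B * \<bar>K\<bar>"
  define \<phi> where "\<phi> s = x s \<bullet> x s" for s
  define \<phi>' where "\<phi>' s = 2 * (x s \<bullet> (A s *v x s))" for s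
  have d\<phi>: "(\<phi> has_real_derivative \<phi>' s) (at s)" if "s > 0" for s
  proof -
    have "(x has_derivative (\<lambda>h. h *\<^sub>R (A s *v x s))) (at s)"
      using dx[of s] that at_within_interior[of s "{0..}"]
      by (simp add: has_vector_derivative_def)
    from has_derivative_inner[OF this this]
    have "(\<phi> has_derivative (\<lambda>h. h * \<phi>' s)) (at s)"
      unfolding \<phi>_def \<phi>'_def by (simp add: inner_commute algebra_simps)
    then show ?thesis
      unfolding has_field_derivative_def by (rule has_derivative_eq_rhs) (simp add: fun_eq_iff)
  qed
  have \<phi>'_bound: "\<bar>\<phi>' s\<bar> \<le> C * \<phi> s" if "s \<in> {0..b}" for s
  proof -
    have "\<bar>\<phi>' s\<bar> \<le> 2 * (norm (x s) * norm (A s *v x s))"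
      unfolding \<phi>'_def using Cauchy_Schwarz_ineq2[of "x s" "A s *v x s"] by simp
    also have "\<dots> \<le> 2 * (norm (x s) * (B * norm (x s) * \<bar>K\<bar>))"
    proof -
      have "norm (A s) * norm (x s) * K \<le> norm (A s) * norm (x s) * \<bar>K\<bar>"
        by (intro mult_left_mono) auto
      also have "\<dots> \<le> B * norm (x s) * \<bar>K\<bar>"
        using B[OF that] by (intro mult_right_mono) auto
      finally have "norm (A s *v x s) \<le> B * norm (x s) * \<bar>K\<bar>"
        using K[of "A s" "x s"] by linarith
      then show ?thesis
        by (intro mult_left_mono) simp_all
    qed
    also have "\<dots> = C * \<phi> s"
      unfolding C_def \<phi>_def by (simp add: dot_square_norm power2_eq_square algebra_simps)
    finally show ?thesis .
  qed
  have "continuous_on {0..} x"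
    unfolding continuous_on_eq_continuous_within
    using dx has_vector_derivative_continuous by (metis atLeast_iff)
  then have "\<phi> t \<le> 0"
    using d\<phi> \<phi>'_bound r t
    by (intro gronwall_zero[of 0 b \<phi> \<phi>' C r])
      (auto simp: \<phi>_def b_def intro: continuous_on_subset continuous_intros)
  then show ?thesis
    unfolding \<phi>_def by (metis inner_eq_zero_iff inner_ge_zero antisym)
qed

lemma continuous_on_det:
  fixes M :: "real \<Rightarrow> real^'n^'n"
  assumes "continuous_on S M"
  shows "continuous_on S (\<lambda>s. det (M s))"
  unfolding det_def using assms
  by (intro continuous_intros) (auto intro!: continuous_intros continuous_on_component)

lemma continuous_on_right_inverse:
  fixes M W :: "real \<Rightarrow> real^'n^'n"
  assumes cM: "continuous_on S M" and inv: "\<And>s. s \<in> S \<Longrightarrow> M s ** W s = mat 1"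
  shows "continuous_on S W"
proof -
  let ?C = "\<lambda>s i j. (\<chi> a c. if c = i then axis j 1 $ a else M s $ a $ c) :: real^'n^'n"
  have d0: "det (M s) \<noteq> 0" if "s \<in> S" for s
    using inv[OF that] det_mul[of "M s" "W s"] by auto
  have cramer_W: "W s = (\<chi> i j. det (?C s i j) / det (M s))" if "s \<in> S" for s
  proof -
    have "W s $ i $ j = det (?C s i j) / det (M s)" for i j
    proof -
      have "M s *v (W s *v axis j 1) = axis j 1"
        by (simp add: matrix_vector_mul_assoc inv[OF that])
      then have "W s *v axis j 1 = (\<chi> k. det (?C s k j) / det (M s))"
        using cramer[OF d0[OF that]] by blast
      moreover have "(W s *v axis j 1) $ i = W s $ i $ j"
        by (simp add: matrix_vector_mult_def axis_def if_distrib cong: if_cong)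
      ultimately show ?thesis
        by simp
    qed
    then show ?thesis
      by (simp add: vec_eq_iff)
  qed
  have cC: "continuous_on S (\<lambda>s. ?C s i j)" for i j
  proof (intro continuous_on_vec_lambda)
    fix a c
    show "continuous_on S (\<lambda>s. if c = i then axis j 1 $ a else M s $ a $ c)"
      by (cases "c = i") (simp_all add: continuous_on_component[OF continuous_on_component[OF cM]])
  qed
  have "continuous_on S (\<lambda>s. (\<chi> i j. det (?C s i j) / det (M s)) :: real^'n^'n)"
    using d0 by (intro continuous_on_vec_lambda continuous_on_divide continuous_on_det[OF cC]
        continuous_on_det[OF cM]) auto
  then show ?thesis
    using cramer_W by (simp cong: continuous_on_cong)
qed

lemma Ivl_lebesgue: "\<tau> > 0 \<Longrightarrow> Ivl \<tau> \<in> sets lebesgue"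
  by (cases \<tau>) (auto simp: Ivl_def atLeastLessThan_def[symmetric] atLeast_def[symmetric])

lemma zero_in_Ivl: "\<tau> > 0 \<Longrightarrow> 0 \<in> Ivl \<tau>"
  unfolding Ivl_def by (simp add: zero_ereal_def)

lemma Ivl_subset_nonneg: "Ivl \<tau> \<subseteq> {0..}"
  unfolding Ivl_def by auto

lemma Icc_subset_Ivl: "t \<in> Ivl \<tau> \<Longrightarrow> {0..t} \<subseteq> Ivl \<tau>"
  unfolding Ivl_def using le_less_trans[of "ereal _" "ereal t" \<tau>] by auto

lemma Ivl_split: "t \<in> Ivl \<tau> \<Longrightarrow> Ivl \<tau> = {0..t} \<union> (Ivl \<tau> \<inter> {t<..})"
  using Icc_subset_Ivl[of t \<tau>] Ivl_subset_nonneg[of \<tau>] by force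

lemma Ivl_extends_beyond: "t \<in> Ivl \<tau> \<Longrightarrow> \<exists>t'>t. {0..t'} \<subseteq> Ivl \<tau>"
proof -
  assume "t \<in> Ivl \<tau>"
  then obtain r where r: "ereal t < ereal r" "ereal r < \<tau>"
    using ereal_dense2 unfolding Ivl_def by blast
  then have "{0..r} \<subseteq> Ivl \<tau>"
    using Icc_subset_Ivl[of r \<tau>] \<open>t \<in> Ivl \<tau>\<close> by (simp add: Ivl_def)
  with r(1) show ?thesis
    by auto
qed

lemma at_within_Ivl:
  assumes "t < t'" "{0..t'} \<subseteq> Ivl \<tau>"
  shows "at t within Ivl \<tau> = at t within {0..t'}"
proof (rule at_within_nhd[of _ "{..<t'}"])
  show "Ivl \<tau> \<inter> {..<t'} - {t} = {0..t'} \<inter> {..<t'} - {t}"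
    using assms(2) unfolding Ivl_def by auto
qed (use assms in auto)

lemma exp_decay_before:
  fixes lam t :: real
  assumes "lam > 0" "t \<ge> 0"
  shows "(\<lambda>s. exp (- lam * (t - s))) integrable_on {0..t}"
    and "integral {0..t} (\<lambda>s. exp (- lam * (t - s))) \<le> 1 / lam"
proof -
  have "((\<lambda>s. exp (- lam * (t - s)) / lam) has_vector_derivative exp (- lam * (t - s)))
      (at s within {0..t})" for s
    using assms(1) by (auto intro!: derivative_eq_intros
        simp: has_real_derivative_iff_has_vector_derivative[symmetric])
  then have "((\<lambda>s. exp (- lam * (t - s))) has_integral
      (exp (- lam * (t - t)) / lam - exp (- lam * (t - 0)) / lam)) {0..t}"
    by (intro fundamental_theorem_of_calculus[OF assms(2)])
  then show "(\<lambda>s. exp (- lam * (t - s))) integrable_on {0..t}"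
    and "integral {0..t} (\<lambda>s. exp (- lam * (t - s))) \<le> 1 / lam"
    using assms(1) by (auto dest: integral_unique)
qed

lemma exp_decay_after:
  fixes lam t :: real
  assumes "lam > 0" "S \<in> sets lebesgue" "S \<subseteq> {t..}"
  shows "(\<lambda>s. exp (- lam * (s - t))) integrable_on S"
    and "integral S (\<lambda>s. exp (- lam * (s - t))) \<le> 1 / lam"
proof -
  have "(\<lambda>s. exp (- lam * (s - t))) = (\<lambda>s. exp (lam * t) * exp (- lam * s))"
    by (simp add: exp_add[symmetric] algebra_simps)
  then have int: "((\<lambda>s. exp (- lam * (s - t))) has_integral 1 / lam) {t..}"
    using has_integral_mult_right[OF has_integral_exp_minus_to_infinity[OF assms(1), of t],
        of "exp (lam * t)"]
    by (simp add: exp_minus field_simps)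
  then have "(\<lambda>s. exp (- lam * (s - t))) absolutely_integrable_on S"
    by (intro set_integrable_subset[OF _ assms(2,3)] nonnegative_absolutely_integrable_1) auto
  then show i: "(\<lambda>s. exp (- lam * (s - t))) integrable_on S"
    using absolutely_integrable_on_def by blast
  show "integral S (\<lambda>s. exp (- lam * (s - t))) \<le> 1 / lam"
    using integral_subset_le[OF assms(3) i has_integral_integrable[OF int]] integral_unique[OF int]
    by simp
qed

lemma continuous_on_time_dependent_compose:
  assumes f: "continuous_on ({0..} \<times> UNIV) (\<lambda>p. f (fst p) (snd p))"
    and w: "continuous_on S w" and S: "S \<subseteq> {0..}"
  shows "continuous_on S (\<lambda>s. f s (w s))"
proof -
  have "continuous_on S (\<lambda>s. (s, w s))"
    using w by (intro continuous_intros)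
  moreover have "(\<lambda>s. (s, w s)) ` S \<subseteq> {0..} \<times> UNIV"
    using S by auto
  ultimately show ?thesis
    using continuous_on_compose2[OF f, of S "\<lambda>s. (s, w s)"] by simp
qed

lemma C1_has_derivative:
  assumes "C1_with_partials f ft fx" "p \<in> {0..} \<times> UNIV"
  shows "((\<lambda>p. f (fst p) (snd p)) has_derivative
    (\<lambda>h. fst h *\<^sub>R ft (fst p) (snd p) + fx (fst p) (snd p) *v snd h)) (at p within {0..} \<times> UNIV)"
  using assms unfolding C1_with_partials_def by (cases p) auto

lemma C1_partial_has_derivative:
  assumes C1: "C1_with_partials f ft fx" and "t \<ge> 0"
  shows "(f t has_derivative (\<lambda>h. fx t x *v h)) (at x)"
proof -
  have d: "((\<lambda>x. (t, x)) has_derivative (\<lambda>h. (0, h))) (at x)"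
    by (auto intro!: derivative_eq_intros)
  have im: "(\<lambda>x. (t, x)) ` UNIV \<subseteq> {0..} \<times> UNIV"
    using \<open>t \<ge> 0\<close> by auto
  show ?thesis
    using has_derivative_in_compose2[OF C1_has_derivative[OF C1] im UNIV_I d] by simp
qed

lemma C1_continuous_on:
  assumes "C1_with_partials f ft fx"
  shows "continuous_on ({0..} \<times> UNIV) (\<lambda>p. f (fst p) (snd p))"
  unfolding continuous_on_eq_continuous_within
  using has_derivative_continuous[OF C1_has_derivative[OF assms]] by blast

lemma (in vector_norm) C1_lipschitz_on_ball:
  assumes C1: "C1_with_partials f ft fx"
    and bound: "\<And>t x. t \<ge> 0 \<Longrightarrow> nrm x \<le> R \<Longrightarrow> mat_norm nrm (fx t x) \<le> Lp"
    and "t \<ge> 0" "nrm a \<le> R" "nrm b \<le> R"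
  shows "nrm (f t a - f t b) \<le> Lp * nrm (a - b)"
  using assms(3-5) bound has_derivative_at_withinI[OF C1_partial_has_derivative[OF C1 \<open>t \<ge> 0\<close>]]
  by (intro nrm_diff_le_derivative_bound[OF convex_nrm_ball]) auto

locale dichotomy = vector_norm nrm for nrm :: "real^'n \<Rightarrow> real" +
  fixes A :: "real \<Rightarrow> real^'n^'n" and N lam :: real
    and T :: "real \<Rightarrow> real \<Rightarrow> real^'n^'n" and P :: "real \<Rightarrow> real^'n^'n"
  assumes continuous_A: "continuous_on {0..} A" and N_pos: "N > 0" and lam_pos: "lam > 0"
    and transition: "transition_matrix A T"
    and P_commute: "\<And>t s. 0 \<le> t \<Longrightarrow> 0 \<le> s \<Longrightarrow> P t ** T t s = T t s ** P s"
    and stable_bound: "\<And>t s. 0 \<le> s \<Longrightarrow> s \<le> t \<Longrightarrow>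
      mat_norm nrm (T t s ** P s) \<le> N * exp (- lam * (t - s))"
    and unstable_bound: "\<And>t s. 0 \<le> t \<Longrightarrow> t \<le> s \<Longrightarrow>
      mat_norm nrm (T t s ** (mat 1 - P s)) \<le> N * exp (- lam * (s - t))"
begin

lemma T_diag: "s \<ge> 0 \<Longrightarrow> T s s = mat 1"
  using transition unfolding transition_matrix_def by blast

lemma T_has_derivative:
  "s \<ge> 0 \<Longrightarrow> t \<ge> 0 \<Longrightarrow> ((\<lambda>t. T t s) has_vector_derivative A t ** T t s) (at t within {0..})"
  using transition unfolding transition_matrix_def by blast

lemma T_vector_has_derivative:
  assumes "s \<ge> 0" "t \<ge> 0"
  shows "((\<lambda>t. T t s *v v) has_vector_derivative A t *v (T t s *v v)) (at t within {0..})"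
  using bounded_linear.has_vector_derivative[OF
      bounded_bilinear.bounded_linear_left[OF bounded_bilinear_matrix_vector_mult]
      T_has_derivative[OF assms]]
  by (simp add: matrix_vector_mul_assoc)

lemma T_cocycle:
  assumes "t \<ge> 0" "r \<ge> 0" "s \<ge> 0"
  shows "T t s = T t r ** T r s"
proof (rule matrix_eq[THEN iffD2], rule allI)
  fix v
  define x where "x t' = T t' s *v v - T t' r *v (T r s *v v)" for t'
  have "x t = 0"
  proof (rule linear_ode_zero_unique[OF continuous_A _ assms(2) _ assms(1)])
    show "(x has_vector_derivative A t' *v x t') (at t' within {0..})" if "t' \<ge> 0" for t'
      unfolding x_def
      using has_vector_derivative_diff[OF T_vector_has_derivative[OF assms(3) that, of v]
          T_vector_has_derivative[OF assms(2) that, of "T r s *v v"]]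
      by (simp add: matrix_vector_mult_diff_distrib)
    show "x r = 0"
      unfolding x_def using T_diag[OF assms(2)] by simp
  qed
  then show "T t s *v v = (T t r ** T r s) *v v"
    unfolding x_def by (simp add: matrix_vector_mul_assoc)
qed

definition "Phi t = T t 0"
definition "Psi t = T 0 t"
definition "P0 = P 0"
definition "Q0 = mat 1 - P 0"

lemma T_eq_Phi_Psi: "t \<ge> 0 \<Longrightarrow> s \<ge> 0 \<Longrightarrow> T t s = Phi t ** Psi s"
  unfolding Phi_def Psi_def by (rule T_cocycle) auto

lemma Phi_Psi: "s \<ge> 0 \<Longrightarrow> Phi s ** Psi s = mat 1"
  using T_eq_Phi_Psi[of s s] T_diag[of s] by simp

lemma Psi_Phi: "s \<ge> 0 \<Longrightarrow> Psi s ** Phi s = mat 1"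
  using T_cocycle[of 0 s 0] T_diag[of 0] unfolding Phi_def Psi_def by simp

lemma Phi_zero: "Phi 0 = mat 1"
  unfolding Phi_def using T_diag by simp

lemma Phi_has_derivative: "t \<ge> 0 \<Longrightarrow> (Phi has_vector_derivative A t ** Phi t) (at t within {0..})"
  unfolding Phi_def using T_has_derivative[of 0 t] by simp

lemma continuous_on_Phi: "continuous_on {0..} Phi"
  unfolding continuous_on_eq_continuous_within
  using Phi_has_derivative has_vector_derivative_continuous by (metis atLeast_iff)

lemma continuous_on_Psi: "continuous_on {0..} Psi"
  by (rule continuous_on_right_inverse[OF continuous_on_Phi Phi_Psi]) simp

lemma T_P_eq:
  assumes "t \<ge> 0" "s \<ge> 0"
  shows "T t s ** P s = Phi t ** P0 ** Psi s"
proof -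
  have "P s ** Phi s = Phi s ** P0"
    unfolding Phi_def P0_def using P_commute assms by simp
  then have "P s = Phi s ** P0 ** Psi s"
    using Phi_Psi[OF assms(2)] by (metis matrix_mul_assoc matrix_mul_rid)
  then have "T t s ** P s = Phi t ** (Psi s ** Phi s) ** P0 ** Psi s"
    using T_eq_Phi_Psi[OF assms] by (simp add: matrix_mul_assoc)
  then show ?thesis
    using Psi_Phi[OF assms(2)] by simp
qed

lemma T_Q_eq:
  assumes "t \<ge> 0" "s \<ge> 0"
  shows "T t s ** (mat 1 - P s) = Phi t ** Q0 ** Psi s"
proof (rule matrix_eq[THEN iffD2], rule allI)
  fix v
  have "(T t s ** (mat 1 - P s)) *v v = T t s *v v - (T t s ** P s) *v v"
    by (simp add: matrix_vector_mul_assoc[symmetric] matrix_vector_mult_diff_rdistrib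
        matrix_vector_mult_diff_distrib)
  also have "\<dots> = (Phi t ** Q0 ** Psi s) *v v"
    using T_eq_Phi_Psi[OF assms] T_P_eq[OF assms] unfolding Q0_def P0_def
    by (simp add: matrix_vector_mul_assoc[symmetric] matrix_vector_mult_diff_rdistrib
        matrix_vector_mult_diff_distrib)
  finally show "(T t s ** (mat 1 - P s)) *v v = (Phi t ** Q0 ** Psi s) *v v" .
qed

end

locale dichotomy_interval = dichotomy nrm A N lam T P
  for nrm :: "real^'n \<Rightarrow> real" and A N lam T P +
  fixes \<tau> :: ereal
  assumes tau_pos: "\<tau> > 0"
begin

abbreviation "Iv \<equiv> Ivl \<tau>"

text \<open>The Lyapunov--Perron operator: by \<open>T_P_eq\<close> and \<open>T_Q_eq\<close>, \<open>green k t\<close> equals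
  \<open>\<integral>\<^sub>0\<^sup>t T(t,s) P(s) k(s) ds - \<integral>\<^sub>t\<^sup>\<tau> T(t,s) (I - P(s)) k(s) ds\<close> (see \<open>green_split\<close>),
  a solution of \<open>z' = A(t) z + k(t)\<close> that is bounded uniformly in \<open>\<tau>\<close>.\<close>

definition green :: "(real \<Rightarrow> real^'n) \<Rightarrow> real \<Rightarrow> real^'n" where
  "green k t = Phi t *v (integral {0..t} (\<lambda>s. Psi s *v k s)
                          - integral Iv (\<lambda>s. Q0 *v (Psi s *v k s)))"

lemma continuous_on_Psi_mult:
  "continuous_on S k \<Longrightarrow> S \<subseteq> {0..} \<Longrightarrow> continuous_on S (\<lambda>s. Psi s *v k s)"
  by (rule bounded_bilinear.continuous_on[OF bounded_bilinear_matrix_vector_mult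
        continuous_on_subset[OF continuous_on_Psi]])

lemma stable_integral:
  assumes k: "continuous_on Iv k" and K: "\<And>s. s \<in> Iv \<Longrightarrow> nrm (k s) \<le> K" and t: "t \<in> Iv"
  shows "(\<lambda>s. Phi t *v (P0 *v (Psi s *v k s))) integrable_on {0..t}"
    and "nrm (integral {0..t} (\<lambda>s. Phi t *v (P0 *v (Psi s *v k s)))) \<le> N * K / lam"
proof -
  have t0: "t \<ge> 0"
    using t Ivl_subset_nonneg by blast
  have K0: "K \<ge> 0"
    using K[OF zero_in_Ivl[OF tau_pos]] nrm_nonneg order_trans by blast
  have bound: "nrm (Phi t *v (P0 *v (Psi s *v k s))) \<le> N * K * exp (- lam * (t - s))"
    if "s \<in> {0..t}" for s
  proof -
    have "Phi t *v (P0 *v (Psi s *v k s)) = (T t s ** P s) *v k s"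
      using T_P_eq[of t s] that by (simp add: matrix_vector_mul_assoc matrix_mul_assoc)
    also have "nrm \<dots> \<le> N * exp (- lam * (t - s)) * nrm (k s)"
      by (rule order_trans[OF nrm_matrix_vector_mult_le mult_right_mono])
        (use stable_bound[of s t] that in auto)
    also have "\<dots> \<le> N * exp (- lam * (t - s)) * K"
      using K[of s] that Icc_subset_Ivl[OF t] N_pos by (intro mult_left_mono) auto
    finally show ?thesis
      by (simp add: algebra_simps)
  qed
  have cont: "continuous_on {0..t} (\<lambda>s. Phi t *v (P0 *v (Psi s *v k s)))"
    using continuous_on_Psi_mult[OF continuous_on_subset[OF k Icc_subset_Ivl[OF t]]] t0
    by (intro bounded_linear.continuous_on[OF matrix_vector_mul_bounded_linear]) auto
  have "0 \<le> N * K"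
    using N_pos K0 by simp
  from nrm_integral_le_decay[OF _ cont exp_decay_before[OF lam_pos t0] this bound]
  show "(\<lambda>s. Phi t *v (P0 *v (Psi s *v k s))) integrable_on {0..t}"
    and "nrm (integral {0..t} (\<lambda>s. Phi t *v (P0 *v (Psi s *v k s)))) \<le> N * K / lam"
    by auto
qed

lemma unstable_integral:
  assumes k: "continuous_on Iv k" and K: "\<And>s. s \<in> Iv \<Longrightarrow> nrm (k s) \<le> K"
    and S: "S \<in> sets lebesgue" "S \<subseteq> Iv" "S \<subseteq> {t..}" and t: "t \<ge> 0"
  shows "(\<lambda>s. Phi t *v (Q0 *v (Psi s *v k s))) integrable_on S"
    and "nrm (integral S (\<lambda>s. Phi t *v (Q0 *v (Psi s *v k s)))) \<le> N * K / lam"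
proof -
  have K0: "K \<ge> 0"
    using K[OF zero_in_Ivl[OF tau_pos]] nrm_nonneg order_trans by blast
  have bound: "nrm (Phi t *v (Q0 *v (Psi s *v k s))) \<le> N * K * exp (- lam * (s - t))"
    if "s \<in> S" for s
  proof -
    have "0 \<le> s"
      using that S(3) t by auto
    then have "Phi t *v (Q0 *v (Psi s *v k s)) = (T t s ** (mat 1 - P s)) *v k s"
      using T_Q_eq[OF t] by (simp add: matrix_vector_mul_assoc matrix_mul_assoc)
    also have "nrm \<dots> \<le> N * exp (- lam * (s - t)) * nrm (k s)"
      by (rule order_trans[OF nrm_matrix_vector_mult_le mult_right_mono])
        (use unstable_bound[of t s] that S t in auto)
    also have "\<dots> \<le> N * exp (- lam * (s - t)) * K"
      using K[of s] that S N_pos by (intro mult_left_mono) auto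
    finally show ?thesis
      by (simp add: algebra_simps)
  qed
  have cont: "continuous_on S (\<lambda>s. Phi t *v (Q0 *v (Psi s *v k s)))"
    using continuous_on_Psi_mult[OF continuous_on_subset[OF k S(2)]] S(2) Ivl_subset_nonneg
    by (intro bounded_linear.continuous_on[OF matrix_vector_mul_bounded_linear]) auto
  have "0 \<le> N * K"
    using N_pos K0 by simp
  from nrm_integral_le_decay[OF S(1) cont exp_decay_after[OF lam_pos S(1,3)] this bound]
  show "(\<lambda>s. Phi t *v (Q0 *v (Psi s *v k s))) integrable_on S"
    and "nrm (integral S (\<lambda>s. Phi t *v (Q0 *v (Psi s *v k s)))) \<le> N * K / lam"
    by auto
qed

lemma integrable_Psi_mult:
  assumes k: "continuous_on Iv k" and t: "t \<in> Iv"
  shows "(\<lambda>s. Psi s *v k s) integrable_on {0..t}"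
  using continuous_on_Psi_mult[OF continuous_on_subset[OF k Icc_subset_Ivl[OF t]]]
  by (intro integrable_continuous_interval) auto

lemma integrable_unstable_part:
  assumes k: "continuous_on Iv k" and K: "\<And>s. s \<in> Iv \<Longrightarrow> nrm (k s) \<le> K"
    and S: "S \<in> sets lebesgue" "S \<subseteq> Iv"
  shows "(\<lambda>s. Q0 *v (Psi s *v k s)) integrable_on S"
  using unstable_integral(1)[OF k K S order_trans[OF S(2) Ivl_subset_nonneg] order_refl]
  by (simp add: Phi_zero)

lemma green_split:
  assumes k: "continuous_on Iv k" and K: "\<And>s. s \<in> Iv \<Longrightarrow> nrm (k s) \<le> K" and t: "t \<in> Iv"
  shows "green k t = integral {0..t} (\<lambda>s. Phi t *v (P0 *v (Psi s *v k s)))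
                     - integral (Iv \<inter> {t<..}) (\<lambda>s. Phi t *v (Q0 *v (Psi s *v k s)))"
proof -
  define u where "u s = Psi s *v k s" for s
  define S where "S = Iv \<inter> {t<..}"
  have S: "S \<in> sets lebesgue" "S \<subseteq> Iv"
    unfolding S_def using Ivl_lebesgue[OF tau_pos] by auto
  have u: "u integrable_on {0..t}"
    unfolding u_def by (rule integrable_Psi_mult[OF k t])
  have Qu: "(\<lambda>s. Q0 *v u s) integrable_on {0..t}" "(\<lambda>s. Q0 *v u s) integrable_on S"
    unfolding u_def using integrable_unstable_part[OF k K _ Icc_subset_Ivl[OF t]]
      integrable_unstable_part[OF k K S] by auto
  have "integral Iv (\<lambda>s. Q0 *v u s) = integral {0..t} (\<lambda>s. Q0 *v u s) + integral S (\<lambda>s. Q0 *v u s)"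
  proof -
    have "{0..t} \<inter> S = {}"
      unfolding S_def by auto
    then show ?thesis
      using integral_Un[OF Qu] Ivl_split[OF t] unfolding S_def by simp
  qed
  moreover have "integral {0..t} u - integral {0..t} (\<lambda>s. Q0 *v u s)
      = integral {0..t} (\<lambda>s. P0 *v u s)"
    using integral_diff[OF u Qu(1)]
    by (simp add: Q0_def P0_def matrix_vector_mult_diff_rdistrib)
  moreover have "(\<lambda>s. P0 *v u s) integrable_on {0..t}"
    using integrable_linear[OF u matrix_vector_mul_bounded_linear] by (simp add: o_def)
  ultimately show ?thesis
    using integral_linear[OF _ matrix_vector_mul_bounded_linear[of "Phi t"], of "\<lambda>s. P0 *v u s"]
      integral_linear[OF Qu(2) matrix_vector_mul_bounded_linear[of "Phi t"]]
    unfolding green_def u_def[symmetric] S_def[symmetric]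
    by (simp add: o_def matrix_vector_mult_diff_distrib algebra_simps)
qed

lemma nrm_green_le:
  assumes k: "continuous_on Iv k" and K: "\<And>s. s \<in> Iv \<Longrightarrow> nrm (k s) \<le> K" and t: "t \<in> Iv"
  shows "nrm (green k t) \<le> 2 * N * K / lam"
proof -
  have "Iv \<inter> {t<..} \<in> sets lebesgue"
    using Ivl_lebesgue[OF tau_pos] by auto
  then have "nrm (integral (Iv \<inter> {t<..}) (\<lambda>s. Phi t *v (Q0 *v (Psi s *v k s)))) \<le> N * K / lam"
    using t Ivl_subset_nonneg by (intro unstable_integral(2)[OF k K]) auto
  moreover have "nrm (integral {0..t} (\<lambda>s. Phi t *v (P0 *v (Psi s *v k s)))) \<le> N * K / lam"
    by (rule stable_integral(2)[OF k K t])
  moreover have "nrm (green k t)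
      \<le> nrm (integral {0..t} (\<lambda>s. Phi t *v (P0 *v (Psi s *v k s))))
        + nrm (integral (Iv \<inter> {t<..}) (\<lambda>s. Phi t *v (Q0 *v (Psi s *v k s))))"
    using green_split[OF k K t] nrm_diff_le_add by simp
  ultimately have "nrm (green k t) \<le> N * K / lam + N * K / lam"
    by linarith
  then show ?thesis
    using lam_pos by (simp add: field_simps)
qed

lemma green_diff:
  assumes k1: "continuous_on Iv k1" and K1: "\<And>s. s \<in> Iv \<Longrightarrow> nrm (k1 s) \<le> K1"
    and k2: "continuous_on Iv k2" and K2: "\<And>s. s \<in> Iv \<Longrightarrow> nrm (k2 s) \<le> K2"
    and t: "t \<in> Iv"
  shows "green k1 t - green k2 t = green (\<lambda>s. k1 s - k2 s) t"
proof -
  have a: "integral {0..t} (\<lambda>s. Psi s *v (k1 s - k2 s))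
      = integral {0..t} (\<lambda>s. Psi s *v k1 s) - integral {0..t} (\<lambda>s. Psi s *v k2 s)"
    using integral_diff[OF integrable_Psi_mult[OF k1 t] integrable_Psi_mult[OF k2 t]]
    by (simp add: matrix_vector_mult_diff_distrib)
  have b: "integral Iv (\<lambda>s. Q0 *v (Psi s *v (k1 s - k2 s)))
      = integral Iv (\<lambda>s. Q0 *v (Psi s *v k1 s)) - integral Iv (\<lambda>s. Q0 *v (Psi s *v k2 s))"
    using integral_diff[OF integrable_unstable_part[OF k1 K1 Ivl_lebesgue[OF tau_pos] order_refl]
        integrable_unstable_part[OF k2 K2 Ivl_lebesgue[OF tau_pos] order_refl]]
    by (simp add: matrix_vector_mult_diff_distrib)
  show ?thesis
    unfolding green_def a b by (simp add: matrix_vector_mult_diff_distrib)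
qed

lemma nrm_green_diff_le:
  assumes k1: "continuous_on Iv k1" and K1: "\<And>s. s \<in> Iv \<Longrightarrow> nrm (k1 s) \<le> K1"
    and k2: "continuous_on Iv k2" and K2: "\<And>s. s \<in> Iv \<Longrightarrow> nrm (k2 s) \<le> K2"
    and D: "\<And>s. s \<in> Iv \<Longrightarrow> nrm (k1 s - k2 s) \<le> D" and t: "t \<in> Iv"
  shows "nrm (green k1 t - green k2 t) \<le> 2 * N * D / lam"
  using nrm_green_le[OF continuous_on_diff[OF k1 k2] D t] green_diff[OF k1 K1 k2 K2 t] by simp

lemma green_has_derivative:
  assumes k: "continuous_on Iv k" and t: "t \<in> Iv"
  shows "(green k has_vector_derivative A t *v green k t + k t) (at t within Iv)"
proof -
  obtain t' where t': "t < t'" "{0..t'} \<subseteq> Iv"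
    using Ivl_extends_beyond[OF t] by blast
  have t0: "t \<ge> 0"
    using t Ivl_subset_nonneg by blast
  define W where "W x = integral {0..x} (\<lambda>s. Psi s *v k s) - integral Iv (\<lambda>s. Q0 *v (Psi s *v k s))"
    for x
  have green_eq: "green k = (\<lambda>x. Phi x *v W x)"
    unfolding green_def W_def by (rule ext) simp
  have "(W has_vector_derivative Psi t *v k t) (at t within {0..t'})"
    using integral_has_vector_derivative[OF continuous_on_Psi_mult[OF
          continuous_on_subset[OF k t'(2)]], of t] t0 t'(1)
    unfolding W_def by (auto intro: has_vector_derivative_diff[where g' = 0, simplified])
  moreover have "(Phi has_vector_derivative A t ** Phi t) (at t within {0..t'})"
    by (rule has_vector_derivative_within_subset[OF Phi_has_derivative[OF t0]]) auto
  ultimately have "(green k has_vector_derivative Phi t *v (Psi t *v k t) + (A t ** Phi t) *v W t)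
      (at t within {0..t'})"
    unfolding green_eq
    by (rule bounded_bilinear.has_vector_derivative[OF bounded_bilinear_matrix_vector_mult, rotated])
  moreover have "Phi t *v (Psi t *v k t) + (A t ** Phi t) *v W t = A t *v green k t + k t"
    using Phi_Psi[OF t0] unfolding green_eq by (simp add: matrix_vector_mul_assoc)
  ultimately show ?thesis
    using at_within_Ivl[OF t'] by simp
qed

lemma continuous_on_green:
  assumes "continuous_on Iv k"
  shows "continuous_on Iv (green k)"
  unfolding continuous_on_eq_continuous_within
  using green_has_derivative[OF assms] has_vector_derivative_continuous by blast

lemma is_solution_of_green_fixpoint:
  fixes f :: "real \<Rightarrow> real^'n \<Rightarrow> real^'n" and y y' z :: "real \<Rightarrow> real^'n"
  defines "k \<equiv> \<lambda>s. A s *v y s + f s (y s + z s) - y' s"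
  assumes y: "\<And>t. t \<in> Iv \<Longrightarrow> (y has_vector_derivative y' t) (at t within Iv)"
    and k: "continuous_on Iv k" and fixed: "\<And>t. t \<in> Iv \<Longrightarrow> green k t = z t"
  shows "is_solution (\<lambda>t x. A t *v x + f t x) \<tau> (\<lambda>t. y t + z t)"
  unfolding is_solution_def
proof
  fix t assume t: "t \<in> Iv"
  have "(z has_vector_derivative A t *v z t + k t) (at t within Iv)"
    using green_has_derivative[OF k t] fixed t
    by (auto intro: has_vector_derivative_transform_within[OF _ zero_less_one t])
  from has_vector_derivative_add[OF y[OF t] this]
  show "((\<lambda>t. y t + z t) has_vector_derivative A t *v (y t + z t) + f t (y t + z t))
      (at t within Iv)"
    by (simp add: k_def matrix_vector_right_distrib algebra_simps)
qed

lemma shadowing_solution: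
  fixes f :: "real \<Rightarrow> real^'n \<Rightarrow> real^'n" and y y' :: "real \<Rightarrow> real^'n"
  assumes f_cont: "continuous_on ({0..} \<times> UNIV) (\<lambda>p. f (fst p) (snd p))"
    and f_lip: "\<And>t a b. t \<ge> 0 \<Longrightarrow> nrm a \<le> R \<Longrightarrow> nrm b \<le> R \<Longrightarrow>
      nrm (f t a - f t b) \<le> Lp * nrm (a - b)"
    and Lp: "0 \<le> Lp" "2 * N * Lp < lam"
    and eps: "0 < \<epsilon>" and radius: "2 * N / (lam - 2 * N * Lp) * \<epsilon> + \<rho> \<le> R"
    and y: "\<And>t. t \<in> Iv \<Longrightarrow> (y has_vector_derivative y' t) (at t within Iv)"
      "continuous_on Iv y'"
    and defect: "\<And>t. t \<in> Iv \<Longrightarrow> nrm (y' t - (A t *v y t + f t (y t))) \<le> \<epsilon>"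
    and y_bound: "\<And>t. t \<in> Iv \<Longrightarrow> nrm (y t) \<le> \<rho>"
  shows "\<exists>x. is_solution (\<lambda>t x. A t *v x + f t x) \<tau> x \<and>
    (\<forall>t\<in>Iv. nrm (x t - y t) \<le> 2 * N / (lam - 2 * N * Lp) * \<epsilon>)"
proof -
  define r where "r = 2 * N / (lam - 2 * N * Lp) * \<epsilon>"
  define h where "h z s = A s *v y s + f s (y s + z s) - y' s" for z :: "real \<Rightarrow> real^'n" and s
  define B where "B = {z. continuous_on Iv z \<and> (\<forall>t\<in>Iv. nrm (z t) \<le> r)}"
  have r0: "0 \<le> r"
    unfolding r_def using N_pos Lp eps by simp
  have cont_y: "continuous_on Iv y"
    unfolding continuous_on_eq_continuous_within using y(1) has_vector_derivative_continuous by blast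
  have h_diff: "nrm (h z s - h w s) \<le> Lp * d"
    if "z \<in> B" "w \<in> B" "s \<in> Iv" "nrm (z s - w s) \<le> d" for z w s d
  proof -
    have "nrm (y s + z s) \<le> R" "nrm (y s + w s) \<le> R"
      using that(1-3) y_bound[OF that(3)] radius nrm_triangle[of "y s"]
      unfolding B_def r_def by (smt (verit) mem_Collect_eq)+
    then have "nrm (h z s - h w s) \<le> Lp * nrm (z s - w s)"
      using f_lip[of s "y s + z s" "y s + w s"] that(3) Ivl_subset_nonneg by (auto simp: h_def)
    also have "\<dots> \<le> Lp * d"
      using that(4) Lp(1) by (rule mult_left_mono)
    finally show ?thesis .
  qed
  have h_B: "continuous_on Iv (h z)" "\<And>s. s \<in> Iv \<Longrightarrow> nrm (h z s) \<le> Lp * r + \<epsilon>"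
    if "z \<in> B" for z
  proof -
    show "continuous_on Iv (h z)"
      using that continuous_on_subset[OF continuous_A Ivl_subset_nonneg] Ivl_subset_nonneg
      unfolding h_def B_def
      by (intro continuous_intros continuous_on_time_dependent_compose[OF f_cont] y(2) cont_y
          bounded_bilinear.continuous_on[OF bounded_bilinear_matrix_vector_mult]) auto
    show "nrm (h z s) \<le> Lp * r + \<epsilon>" if "s \<in> Iv" for s
    proof -
      have "(\<lambda>_. 0) \<in> B"
        using r0 by (simp add: B_def)
      then have "nrm (h z s - h (\<lambda>_. 0) s) \<le> Lp * r"
        using \<open>z \<in> B\<close> that by (intro h_diff) (auto simp: B_def)
      moreover have "nrm (h (\<lambda>_. 0) s) \<le> \<epsilon>"
        using defect[OF that] nrm_minus_commute by (simp add: h_def)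
      ultimately show ?thesis
        using nrm_triangle[of "h z s - h (\<lambda>_. 0) s" "h (\<lambda>_. 0) s"] by simp
    qed
  qed
  have "\<exists>z\<in>B. \<forall>t\<in>Iv. green (h z) t = z t"
  proof (rule sup_contraction_fixpoint[where F = "\<lambda>z. green (h z)" and S = Iv, OF r0,
        folded B_def])
    show "0 \<le> 2 * N * Lp / lam" "2 * N * Lp / lam < 1"
      using N_pos lam_pos Lp by auto
    have "2 * N * (Lp * r + \<epsilon>) / lam = r"
      unfolding r_def using lam_pos Lp(2) by (simp add: field_simps)
    then show "green (h z) \<in> B" if "z \<in> B" for z
      using nrm_green_le[OF h_B[OF that]] continuous_on_green[OF h_B(1)[OF that]] that
      by (auto simp: B_def)
    show "nrm (green (h z) t - green (h w) t) \<le> 2 * N * Lp / lam * d"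
      if "z \<in> B" "w \<in> B" "\<And>s. s \<in> Iv \<Longrightarrow> nrm (z s - w s) \<le> d" "t \<in> Iv" for z w d t
    proof -
      have "\<And>s. s \<in> Iv \<Longrightarrow> nrm (h z s - h w s) \<le> Lp * d"
        using h_diff that(1-3) by blast
      from nrm_green_diff_le[OF h_B[OF that(1)] h_B[OF that(2)] this that(4)] show ?thesis
        by (simp add: mult_ac)
    qed
  qed
  then obtain z where "z \<in> B" and "\<And>t. t \<in> Iv \<Longrightarrow> green (h z) t = z t"
    by blast
  then show ?thesis
    using is_solution_of_green_fixpoint[OF y(1), of f z] h_B(1)
    unfolding B_def r_def h_def by (intro exI[of _ "\<lambda>t. y t + z t"]) auto
qed

end

context dichotomy
begin

lemma cond_lip_shadowing_of_lipschitz: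
  fixes f :: "real \<Rightarrow> real^'n \<Rightarrow> real^'n"
  assumes f_cont: "continuous_on ({0..} \<times> UNIV) (\<lambda>p. f (fst p) (snd p))"
    and f_lip: "\<And>t a b. t \<ge> 0 \<Longrightarrow> nrm a \<le> R \<Longrightarrow> nrm b \<le> R \<Longrightarrow>
      nrm (f t a - f t b) \<le> Lp * nrm (a - b)"
    and Lp: "0 \<le> Lp" "2 * N * Lp < lam" and "\<rho> < R"
  shows "cond_lip_shadowing nrm (\<lambda>t x. A t *v x + f t x) {y. nrm y \<le> \<rho>}"
proof -
  define \<kappa> where "\<kappa> = 2 * N / (lam - 2 * N * Lp)"
  have \<kappa>: "\<kappa> > 0"
    unfolding \<kappa>_def using N_pos Lp by simp
  have "\<exists>x. is_solution (\<lambda>t x. A t *v x + f t x) \<tau> x \<and> (\<forall>t\<in>Ivl \<tau>. nrm (x t - y t) \<le> \<kappa> * \<epsilon>)"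
    if "0 < \<epsilon>" "\<epsilon> \<le> (R - \<rho>) / \<kappa>" "\<tau> > 0"
      and ps: "pseudosolution nrm (\<lambda>t x. A t *v x + f t x) \<tau> y \<epsilon>"
      and y_bound: "\<forall>t\<in>Ivl \<tau>. nrm (y t) \<le> \<rho>"
    for \<epsilon> \<tau> y
  proof -
    interpret dichotomy_interval nrm A N lam T P \<tau>
      using \<open>\<tau> > 0\<close> by unfold_locales
    obtain y' where y': "\<And>t. t \<in> Ivl \<tau> \<Longrightarrow> (y has_vector_derivative y' t) (at t within Ivl \<tau>)"
      "continuous_on (Ivl \<tau>) y'"
      "\<And>t. t \<in> Ivl \<tau> \<Longrightarrow> nrm (y' t - (A t *v y t + f t (y t))) \<le> \<epsilon>"
      using ps unfolding pseudosolution_def by blast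
    have "\<kappa> * \<epsilon> + \<rho> \<le> R"
      using \<open>\<epsilon> \<le> (R - \<rho>) / \<kappa>\<close> \<kappa> by (simp add: field_simps)
    then show ?thesis
      unfolding \<kappa>_def using y_bound
      by (intro shadowing_solution[OF f_cont f_lip Lp \<open>0 < \<epsilon>\<close> _ y']) auto
  qed
  moreover have "(R - \<rho>) / \<kappa> > 0"
    using \<kappa> \<open>\<rho> < R\<close> by simp
  ultimately show ?thesis
    unfolding cond_lip_shadowing_def using \<kappa>
    by (intro exI[of _ "(R - \<rho>) / \<kappa>"] exI[of _ \<kappa>] conjI allI impI) auto
qed

end

lemma isCont_exists_gt_less:
  fixes g :: "real \<Rightarrow> real"
  assumes "isCont g \<rho>" "g \<rho> < c"
  shows "\<exists>R>\<rho>. g R < c"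
proof -
  have "\<forall>\<^sub>F R in at_right \<rho>. g R < c \<and> R > \<rho>"
    using order_tendstoD(2)[OF tendsto_within_subset[OF assms(1)[unfolded isCont_def]] assms(2)]
    by (auto simp: eventually_at_right_less intro: eventually_conj)
  then show ?thesis
    using eventually_happens[of _ "at_right \<rho>"] by auto
qed

theorem mainTheorem5:
  fixes nrm :: "real^'n \<Rightarrow> real"
    and A :: "real \<Rightarrow> real^'n^'n"
    and f :: "real \<Rightarrow> real^'n \<Rightarrow> real^'n"
    and ft :: "real \<Rightarrow> real^'n \<Rightarrow> real^'n"
    and fx :: "real \<Rightarrow> real^'n \<Rightarrow> real^'n^'n"
    and N lam :: real and k :: nat and L :: "nat \<Rightarrow> real" and \<rho> :: real
  assumes "is_norm nrm"
    and "continuous_on {0..} A"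
    and "N > 0" and "lam > 0"
    and "exp_dichotomy nrm A N lam"
    and "C1_with_partials f ft fx"
    and "\<forall>j\<in>{1..k+1}. L j \<ge> 0"
    and "L 1 < lam / (2 * N)"
    and "\<forall>t\<ge>0. \<forall>x. mat_norm nrm (fx t x) \<le> (\<Sum>j=1..k+1. L j * nrm x ^ (j - 1))"
    and "\<rho> > 0"
    and "(\<Sum>j=1..k+1. L j * \<rho> ^ (j - 1)) < lam / (2 * N)"
  shows "cond_lip_shadowing nrm (\<lambda>t x. A t *v x + f t x) {y. nrm y \<le> \<rho>}"
proof -
  obtain T P where "transition_matrix A T"
    and "\<forall>t s. 0 \<le> t \<and> 0 \<le> s \<longrightarrow> P t ** T t s = T t s ** P s"
    and "\<forall>t s. 0 \<le> s \<and> s \<le> t \<longrightarrow> mat_norm nrm (T t s ** P s) \<le> N * exp (- lam * (t - s))"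
    and "\<forall>t s. 0 \<le> t \<and> t \<le> s \<longrightarrow> mat_norm nrm (T t s ** (mat 1 - P s)) \<le> N * exp (- lam * (s - t))"
    using assms(5) unfolding exp_dichotomy_def by blast
  then interpret dichotomy nrm A N lam T P
    using assms(1-4) by (intro dichotomy.intro vector_norm.intro dichotomy_axioms.intro) auto
  define Lip where "Lip R = (\<Sum>j=1..k+1. L j * R ^ (j - 1))" for R :: real
  have "isCont Lip \<rho>"
    unfolding Lip_def by (intro continuous_intros)
  then obtain R where R: "\<rho> < R" "Lip R < lam / (2 * N)"
    using isCont_exists_gt_less assms(11) unfolding Lip_def by blast
  have "0 \<le> Lip R"
    unfolding Lip_def using assms(7,10) R(1) by (intro sum_nonneg) auto
  moreover have "2 * N * Lip R < lam"
    using R(2) assms(3) by (simp add: field_simps)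
  moreover have fx_bound: "mat_norm nrm (fx t x) \<le> Lip R" if "t \<ge> 0" "nrm x \<le> R" for t x
  proof -
    have "(\<Sum>j=1..k+1. L j * nrm x ^ (j - 1)) \<le> Lip R"
      unfolding Lip_def using assms(7) that(2) by (intro sum_mono mult_left_mono power_mono) auto
    then show ?thesis
      by (rule order_trans[OF assms(9)[rule_format, OF that(1)]])
  qed
  ultimately show ?thesis
    using R(1) by (intro cond_lip_shadowing_of_lipschitz[OF C1_continuous_on[OF assms(6)]
        C1_lipschitz_on_ball[OF assms(6) fx_bound]])
qed

end
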